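(* For $\beta=(\beta_1,\beta_2)$, $\beta'=(\beta_1',\beta_2')$ with $\beta_1>\beta_2$, $\beta_1'>\beta_2'$, let $\varphi_\beta:\mathbb{R}^2\to\mathbb{R}^2$, $\varphi_\beta(S_1,S_2)=(\beta_1S_1+\beta_2S_2,\,1-S_1-S_2)$, and $g=g(\beta',\beta):=\varphi_{\beta'}^{-1}\circ\varphi_\beta$. Let $T_{ph}:=\{(S_1,S_2)\in\mathbb{R}_{\ge0}^2: S_1+S_2\le 1\}$. Then $g(T_{ph})\subset T_{ph}$ if and only if $\beta_2'\le\beta_2$ and $\beta_1\le\beta_1'$. *)

theory Defs
  imports "HOL-Analysis.Analysis"
begin

definition phi :: "real \<times> real \<Rightarrow> real \<times> real \<Rightarrow> real \<times> real" where
  "phi \<beta> S = (fst \<beta> * fst S + snd \<beta> * snd S, 1 - fst S - snd S)"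

definition gmap :: "real \<times> real \<Rightarrow> real \<times> real \<Rightarrow> real \<times> real \<Rightarrow> real \<times> real" where
  "gmap \<beta>' \<beta> = inv (phi \<beta>') \<circ> phi \<beta>"

definition T_ph :: "(real \<times> real) set" where
  "T_ph = {S. fst S \<ge> 0 \<and> snd S \<ge> 0 \<and> fst S + snd S \<le> 1}"

end

theory Submission
  imports Defs
begin

text \<open>Both \<open>phi \<beta>\<close> and \<open>phi \<beta>'\<close> are affine with the same second component
  \<open>1 - S1 - S2\<close>, so \<open>g\<close> is linear and preserves \<open>S1 + S2\<close>: its matrix is column
  stochastic. Such a matrix maps the triangle \<open>T_ph\<close> into itself iff all its entries
  are nonnegative, i.e. iff the images of the vertices \<open>(1, 0)\<close> and \<open>(0, 1)\<close> lie in \<open>T_ph\<close>.\<close>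

lemma inj_phi:
  fixes a b :: real
  assumes "a \<noteq> b"
  shows "inj (phi (a, b))"
proof (rule injI)
  fix x y :: "real \<times> real"
  assume "phi (a, b) x = phi (a, b) y"
  then have sum: "fst x + snd x = fst y + snd y"
    and "a * fst x + b * snd x = a * fst y + b * snd y"
    by (auto simp: phi_def)
  then have "(a - b) * (fst x - fst y) = 0"
    by algebra
  with assms have "fst x = fst y" by simp
  with sum show "x = y" by (simp add: prod_eq_iff)
qed

lemma gmap_eq:
  fixes a b a' b' :: real
  assumes "a' \<noteq> b'"
  shows "gmap (a', b') (a, b) s =
    ((a - b') / (a' - b') * fst s + (b - b') / (a' - b') * snd s,
     (a' - a) / (a' - b') * fst s + (a' - b) / (a' - b') * snd s)"
    (is "_ = ?g")
proof -
  have "a' - b' \<noteq> 0" using assms by simp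
  then have "phi (a', b') ?g = phi (a, b) s"
    unfolding phi_def prod_eq_iff fst_conv snd_conv
    by (simp add: divide_simps) (simp add: algebra_simps)
  then show ?thesis
    unfolding gmap_def comp_def by (metis inv_f_f inj_phi assms)
qed

lemma stochastic_image_T_ph_subset_iff:
  fixes p q r t :: real
  assumes "p + r = 1" and "q + t = 1"
  shows "(\<lambda>s. (p * fst s + q * snd s, r * fst s + t * snd s)) ` T_ph \<subseteq> T_ph
    \<longleftrightarrow> 0 \<le> p \<and> 0 \<le> q \<and> 0 \<le> r \<and> 0 \<le> t"
    (is "?f ` T_ph \<subseteq> T_ph \<longleftrightarrow> _")
proof
  assume "?f ` T_ph \<subseteq> T_ph"
  moreover have "(1, 0) \<in> T_ph" and "(0, 1) \<in> T_ph"
    by (auto simp: T_ph_def)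
  ultimately have "?f (1, 0) \<in> T_ph" and "?f (0, 1) \<in> T_ph"
    by blast+
  then show "0 \<le> p \<and> 0 \<le> q \<and> 0 \<le> r \<and> 0 \<le> t"
    by (simp_all add: T_ph_def)
next
  assume nonneg: "0 \<le> p \<and> 0 \<le> q \<and> 0 \<le> r \<and> 0 \<le> t"
  show "?f ` T_ph \<subseteq> T_ph"
  proof (rule image_subsetI)
    fix s assume "s \<in> T_ph"
    then have "0 \<le> fst s" "0 \<le> snd s" "fst s + snd s \<le> 1"
      by (auto simp: T_ph_def)
    moreover have "(p * fst s + q * snd s) + (r * fst s + t * snd s) = fst s + snd s"
      using assms by algebra
    ultimately show "?f s \<in> T_ph"
      using nonneg by (simp add: T_ph_def)
  qed
qed

theorem lemma3p12:
  fixes \<beta>1 \<beta>2 \<beta>1' \<beta>2' :: real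
  assumes "\<beta>1 > \<beta>2" and "\<beta>1' > \<beta>2'"
  shows "gmap (\<beta>1', \<beta>2') (\<beta>1, \<beta>2) ` T_ph \<subseteq> T_ph \<longleftrightarrow> (\<beta>2' \<le> \<beta>2 \<and> \<beta>1 \<le> \<beta>1')"
proof -
  have d: "\<beta>1' - \<beta>2' > 0" using assms(2) by simp
  have g: "gmap (\<beta>1', \<beta>2') (\<beta>1, \<beta>2) = (\<lambda>s.
      ((\<beta>1 - \<beta>2') / (\<beta>1' - \<beta>2') * fst s + (\<beta>2 - \<beta>2') / (\<beta>1' - \<beta>2') * snd s,
       (\<beta>1' - \<beta>1) / (\<beta>1' - \<beta>2') * fst s + (\<beta>1' - \<beta>2) / (\<beta>1' - \<beta>2') * snd s))"
    using d by (intro ext gmap_eq) simp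
  have column_sums: "(\<beta>1 - \<beta>2') / (\<beta>1' - \<beta>2') + (\<beta>1' - \<beta>1) / (\<beta>1' - \<beta>2') = 1"
    "(\<beta>2 - \<beta>2') / (\<beta>1' - \<beta>2') + (\<beta>1' - \<beta>2) / (\<beta>1' - \<beta>2') = 1"
    using d by (simp_all add: divide_simps)
  show ?thesis
    unfolding g stochastic_image_T_ph_subset_iff[OF column_sums]
    using assms d by (auto simp: zero_le_divide_iff)
qed

end
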